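(* Let $d\ge2$, $k\in\mathbb{N}_0$, $Y_k$ a harmonic homogeneous polynomial of degree $k$ on $\mathbb{R}^d$, $\alpha\in\mathbb{R}$, and $H_{\alpha,k}(x)=|x|^{2\alpha}Y_k(x)$ on $\mathbb{R}^d\setminus\{0\}$. If $\alpha\in\mathbb{N}_0$ or $\alpha=1-\frac d2-k+j$ for some $j\in\mathbb{N}_0$, then $H_{\alpha,k}$ is polyharmonic of finite order (i.e. $\Delta^pH_{\alpha,k}=0$ for some $p$). If $\alpha$ is none of these numbers, then for $0<r_0<r_1\le\infty$ the restriction of $H_{\alpha,k}$ to $A(r_0,r_1)$ is polyharmonic of infinite order and type at most $1/r_0$.
   Context: $A(r_0,r_1)=\{x\in\mathbb{R}^d: r_0<|x|<r_1\}$. A function $f:G\to\mathbb{C}$ on a domain $G\subset\mathbb{R}^d$ is polyharmonic of infinite order and type $\tau\ge0$ if $f\in C^\infty(G)$ and for every compact $K\subset G$ and every $\varepsilon>0$ there is $C_{K,\varepsilon}>0$ with $\max_{x\in K}|\Delta^p f(x)|\le C_{K,\varepsilon}(2p)!(\tau+\varepsilon)^{2p}$ for all $p\in\mathbb{N}_0$. "Type at most $1/r_0$" means it is of type $1/r_0$ in this sense. *)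

theory Defs
  imports "HOL-Analysis.Analysis"
begin

definition partial_deriv :: "'n::finite \<Rightarrow> (real^'n \<Rightarrow> 'b::real_normed_vector) \<Rightarrow> real^'n \<Rightarrow> 'b" where
  "partial_deriv i f x = frechet_derivative f (at x) (axis i 1)"

definition laplacian :: "(real^'n::finite \<Rightarrow> 'b::real_normed_vector) \<Rightarrow> real^'n \<Rightarrow> 'b" where
  "laplacian f x = (\<Sum>i\<in>UNIV. partial_deriv i (partial_deriv i f) x)"

primrec Ck_on :: "nat \<Rightarrow> (real^'n::finite) set \<Rightarrow> (real^'n \<Rightarrow> 'b::real_normed_vector) \<Rightarrow> bool" where
  "Ck_on 0 G f = continuous_on G f"
| "Ck_on (Suc k) G f = ((\<forall>x\<in>G. f differentiable (at x)) \<and> continuous_on G f \<and>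
      (\<forall>i. Ck_on k G (partial_deriv i f)))"

definition smooth_on :: "(real^'n::finite) set \<Rightarrow> (real^'n \<Rightarrow> 'b::real_normed_vector) \<Rightarrow> bool" where
  "smooth_on G f = (\<forall>k. Ck_on k G f)"

definition homogeneous_poly :: "nat \<Rightarrow> (real^'n::finite \<Rightarrow> real) \<Rightarrow> bool" where
  "homogeneous_poly k Y = (\<exists>c :: ('n \<Rightarrow> nat) \<Rightarrow> real.
      \<forall>x. Y x = (\<Sum>a\<in>{a. sum a UNIV = k}. c a * (\<Prod>i\<in>UNIV. (x $ i) ^ a i)))"

definition harmonic_homogeneous_poly :: "nat \<Rightarrow> (real^'n::finite \<Rightarrow> real) \<Rightarrow> bool" where
  "harmonic_homogeneous_poly k Y = (homogeneous_poly k Y \<and> (\<forall>x. laplacian Y x = 0))"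

definition annulus :: "real \<Rightarrow> ereal \<Rightarrow> (real^'n::finite) set" where
  "annulus r0 r1 = {x. r0 < norm x \<and> ereal (norm x) < r1}"

definition polyharmonic_infinite_order_type ::
  "(real^'n::finite) set \<Rightarrow> real \<Rightarrow> (real^'n \<Rightarrow> complex) \<Rightarrow> bool" where
  "polyharmonic_infinite_order_type G \<tau> f =
     (smooth_on G f \<and>
      (\<forall>K \<epsilon>. compact K \<and> K \<subseteq> G \<and> \<epsilon> > 0 \<longrightarrow>
         (\<exists>C>0. \<forall>p::nat. \<forall>x\<in>K. norm ((laplacian ^^ p) f x) \<le> C * fact (2*p) * (\<tau> + \<epsilon>) ^ (2*p))))"

definition polyharmonic_finite_order :: "(real^'n::finite) set \<Rightarrow> (real^'n \<Rightarrow> complex) \<Rightarrow> bool" where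
  "polyharmonic_finite_order G f = (\<exists>p. \<forall>x\<in>G. (laplacian ^^ p) f x = 0)"

end

theory Submission
  imports Defs "HOL-Real_Asymp.Real_Asymp"
begin

(* The heart of the proof is the identity, valid for x <> 0,
       Laplacian (|x|^g Y) = g (g - 2 + d + 2m) |x|^(g-2) Y,
   obtained from the product rule for the Laplacian, the formula
   Laplacian |x|^g = g (g - 2 + d) |x|^(g-2), Euler's identity x . grad Y = m Y and
   Laplacian Y = 0.  Iterating it gives Laplacian^p H = c_p |x|^(2 alpha - 2p) Y with an
   explicit product c_p = lap_coeff alpha d m p of p quadratic factors.
   - If alpha is a natural number or alpha = 1 - d/2 - m + j, one factor vanishes, so
     Laplacian^p H = 0 for large p: H is polyharmonic of finite order.
   - In every case |c_p| = O((2p)! q^(2p)) for each q > 1, because the p-th factor is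
     asymptotic to (2p+1)(2p+2); on a compact set where |x| >= rho > r0 this yields the
     bound C (2p)! (1/r0 + eps)^(2p), i.e. type at most 1/r0 on the annulus A(r0,r1). *)

lemma frechet_derivative_local:
  assumes "open S" "x \<in> S" "\<And>y. y \<in> S \<Longrightarrow> f y = g y"
  shows "frechet_derivative f (at x) = frechet_derivative g (at x)"
proof -
  have "(f has_derivative D) (at x) \<longleftrightarrow> (g has_derivative D) (at x)" for D
    using has_derivative_transform_within_open[OF _ assms(1,2), of f D UNIV g]
          has_derivative_transform_within_open[OF _ assms(1,2), of g D UNIV f] assms(3)
    by auto
  then show ?thesis unfolding frechet_derivative_def by simp
qed

lemma partial_deriv_local:
  assumes "open S" "x \<in> S" "\<And>y. y \<in> S \<Longrightarrow> f y = g y"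
  shows "partial_deriv i f x = partial_deriv i g x"
  unfolding partial_deriv_def using frechet_derivative_local[OF assms] by simp

lemma laplacian_local:
  assumes "open S" "x \<in> S" "\<And>y. y \<in> S \<Longrightarrow> f y = g y"
  shows "laplacian f x = laplacian g x"
proof -
  have "partial_deriv i f y = partial_deriv i g y" if "y \<in> S" for i y
    using partial_deriv_local[OF assms(1) that assms(3)] .
  then show ?thesis unfolding laplacian_def
    using partial_deriv_local[OF assms(1,2)] by (metis (no_types, lifting))
qed

lemma partial_deriv_eq:
  assumes "(f has_derivative D) (at x)"
  shows "partial_deriv i f x = D (axis i 1)"
  unfolding partial_deriv_def using frechet_derivative_at[OF assms] by simp

lemma partial_deriv_const: "partial_deriv i (\<lambda>x. c) = (\<lambda>x. 0)"
  unfolding partial_deriv_def by (simp add: fun_eq_iff)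

lemma has_derivative_coord:
  "((\<lambda>x::real^'n::finite. x $ j) has_derivative (\<lambda>h. h $ j)) (at y)"
  by (rule bounded_linear.has_derivative[OF bounded_linear_vec_nth has_derivative_ident])

lemma partial_deriv_coord:
  "partial_deriv i (\<lambda>x::real^'n::finite. x $ j) = (\<lambda>x. if i = j then 1 else 0)"
proof
  fix x :: "real^'n"
  have "partial_deriv i (\<lambda>x::real^'n. x $ j) x = axis i 1 $ j"
    by (rule partial_deriv_eq[OF has_derivative_coord])
  then show "partial_deriv i (\<lambda>x::real^'n. x $ j) x = (if i = j then 1 else 0)"
    by (simp add: axis_def)
qed

lemma partial_deriv_add:
  assumes "f differentiable at x" "g differentiable at x"
  shows "partial_deriv i (\<lambda>y. f y + g y) x = partial_deriv i f x + partial_deriv i g x"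
proof -
  have "((\<lambda>y. f y + g y) has_derivative
          (\<lambda>h. frechet_derivative f (at x) h + frechet_derivative g (at x) h)) (at x)"
    using assms by (intro has_derivative_add) (auto simp: frechet_derivative_works)
  from partial_deriv_eq[OF this, of i] show ?thesis by (simp add: partial_deriv_def)
qed

text \<open>Leibniz rule; the order of the factors is kept, so it holds in any normed algebra.\<close>

lemma partial_deriv_mult:
  fixes f g :: "real^'n::finite \<Rightarrow> 'b::real_normed_algebra"
  assumes "f differentiable at x" "g differentiable at x"
  shows "partial_deriv i (\<lambda>y. f y * g y) x
       = f x * partial_deriv i g x + partial_deriv i f x * g x"
proof -
  have "((\<lambda>y. f y * g y) has_derivative
          (\<lambda>h. f x * frechet_derivative g (at x) h + frechet_derivative f (at x) h * g x)) (at x)"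
    using assms by (intro has_derivative_mult) (auto simp: frechet_derivative_works)
  from partial_deriv_eq[OF this, of i] show ?thesis by (simp add: partial_deriv_def)
qed

lemma partial_deriv_linear:
  assumes "bounded_linear L" "f differentiable at x"
  shows "partial_deriv i (\<lambda>y. L (f y)) x = L (partial_deriv i f x)"
proof -
  have "((\<lambda>y. L (f y)) has_derivative (\<lambda>h. L (frechet_derivative f (at x) h))) (at x)"
    using assms(2) unfolding frechet_derivative_works
    by (rule bounded_linear.has_derivative[OF assms(1)])
  from partial_deriv_eq[OF this, of i] show ?thesis by (simp add: partial_deriv_def)
qed

lemma Ck_on_cong:
  assumes "open G" "\<And>y. y \<in> G \<Longrightarrow> f y = g y"
  shows "Ck_on k G f = Ck_on k G g"
  using assms(2)
proof (induction k arbitrary: f g)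
  case 0
  then show ?case using continuous_on_cong by auto
next
  case (Suc k)
  have "(f differentiable at x) = (g differentiable at x)" if "x \<in> G" for x
    using has_derivative_transform_within_open[OF _ assms(1) that, of f _ UNIV g]
          has_derivative_transform_within_open[OF _ assms(1) that, of g _ UNIV f] Suc.prems
    unfolding differentiable_def by metis
  moreover have "Ck_on k G (partial_deriv i f) = Ck_on k G (partial_deriv i g)" for i
    by (rule Suc.IH) (rule partial_deriv_local[OF assms(1)], auto simp: Suc.prems)
  ultimately show ?case using continuous_on_cong[of G G f g] Suc.prems by auto
qed

lemma Ck_on_Suc_imp: "Ck_on (Suc k) G f \<Longrightarrow> Ck_on k G f"
proof (induction k arbitrary: f)
  case (Suc k) then show ?case by (metis Ck_on.simps(2))
qed simp

lemma Ck_on_subset: "Ck_on k G f \<Longrightarrow> G' \<subseteq> G \<Longrightarrow> Ck_on k G' f"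
  by (induction k arbitrary: f) (auto intro: continuous_on_subset)

lemma Ck_on_2_differentiable:
  assumes "Ck_on 2 G f" "x \<in> G"
  shows "f differentiable at x" "partial_deriv i f differentiable at x"
  using assms by (auto simp: numeral_2_eq_2)

lemma Ck_on_const: "Ck_on k G (\<lambda>x. c)"
  by (induction k arbitrary: c) (simp_all add: partial_deriv_const)

lemma Ck_on_coord: "Ck_on k G (\<lambda>x::real^'n::finite. x $ j)"
proof (cases k)
  case 0 then show ?thesis by (simp add: continuous_on_component continuous_on_id)
next
  case (Suc m)
  then show ?thesis using has_derivative_coord
    by (auto simp: partial_deriv_coord Ck_on_const differentiable_def
                   continuous_on_component continuous_on_id)
qed

lemma Ck_on_add:
  assumes "open G" "Ck_on k G f" "Ck_on k G g"
  shows "Ck_on k G (\<lambda>x. f x + g x)"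
  using assms(2,3)
proof (induction k arbitrary: f g)
  case 0 then show ?case by (auto intro: continuous_on_add)
next
  case (Suc k)
  have "Ck_on k G (partial_deriv i (\<lambda>x. f x + g x))" for i
    using Ck_on_cong[OF assms(1), of "partial_deriv i (\<lambda>x. f x + g x)"] Suc
    by (auto simp: partial_deriv_add)
  then show ?case using Suc.prems by (auto intro: continuous_on_add)
qed

lemma Ck_on_mult:
  fixes f g :: "real^'n::finite \<Rightarrow> 'b::real_normed_algebra"
  assumes "open G" "Ck_on k G f" "Ck_on k G g"
  shows "Ck_on k G (\<lambda>x. f x * g x)"
  using assms(2,3)
proof (induction k arbitrary: f g)
  case 0 then show ?case by (auto intro: continuous_on_mult)
next
  case (Suc k)
  have "Ck_on k G (partial_deriv i (\<lambda>x. f x * g x))" for i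
  proof -
    have "Ck_on k G (\<lambda>y. f y * partial_deriv i g y + partial_deriv i f y * g y)"
      using Suc Ck_on_Suc_imp[of k G f] Ck_on_Suc_imp[of k G g]
      by (intro Ck_on_add[OF assms(1)]) auto
    then show ?thesis
      using Ck_on_cong[OF assms(1), of "partial_deriv i (\<lambda>x. f x * g x)"] Suc.prems
      by (auto simp: partial_deriv_mult)
  qed
  then show ?case using Suc.prems by (auto intro: continuous_on_mult)
qed

lemma Ck_on_sum:
  assumes "open G" "\<And>a. a \<in> S \<Longrightarrow> Ck_on k G (f a)"
  shows "Ck_on k G (\<lambda>x. \<Sum>a\<in>S. f a x)"
proof (cases "finite S")
  case True
  then show ?thesis using assms(2)
    by (induction S rule: finite_induct) (simp_all add: Ck_on_add[OF assms(1)] Ck_on_const)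
qed (simp add: Ck_on_const)

lemma Ck_on_prod:
  fixes f :: "'a \<Rightarrow> real^'n::finite \<Rightarrow> 'b::{real_normed_algebra,comm_monoid_mult}"
  assumes "open G" "\<And>a. a \<in> S \<Longrightarrow> Ck_on k G (f a)"
  shows "Ck_on k G (\<lambda>x. \<Prod>a\<in>S. f a x)"
proof (cases "finite S")
  case True
  then show ?thesis using assms(2)
    by (induction S rule: finite_induct) (simp_all add: Ck_on_mult[OF assms(1)] Ck_on_const)
qed (simp add: Ck_on_const)

lemma Ck_on_power:
  fixes f :: "real^'n::finite \<Rightarrow> 'b::real_normed_algebra_1"
  assumes "open G" "Ck_on k G f"
  shows "Ck_on k G (\<lambda>x. f x ^ m)"
  by (induction m) (simp_all add: Ck_on_mult[OF assms(1)] assms(2) Ck_on_const)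

lemma Ck_on_linear:
  assumes "open G" "bounded_linear L" "Ck_on k G f"
  shows "Ck_on k G (\<lambda>x. L (f x))"
  using assms(3)
proof (induction k arbitrary: f)
  case 0
  then show ?case
    using continuous_on_compose[of G f L] linear_continuous_on[OF assms(2)]
    by (simp add: o_def)
next
  case (Suc k)
  have "Ck_on k G (partial_deriv i (\<lambda>x. L (f x)))" for i
    using Ck_on_cong[OF assms(1), of "partial_deriv i (\<lambda>x. L (f x))"] Suc
    by (auto simp: partial_deriv_linear[OF assms(2)])
  moreover have "(\<lambda>x. L (f x)) differentiable at y" if "y \<in> G" for y
  proof -
    have "f differentiable at y" using Suc.prems \<open>y \<in> G\<close> by simp
    then obtain D where "(f has_derivative D) (at y)"
      unfolding differentiable_def by blast
    from bounded_linear.has_derivative[OF assms(2) this] show ?thesis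
      unfolding differentiable_def by blast
  qed
  moreover have "continuous_on G (\<lambda>x. L (f x))"
    using Suc.prems continuous_on_compose[of G f L] linear_continuous_on[OF assms(2)]
    by (simp add: o_def)
  ultimately show ?case unfolding Ck_on.simps by blast
qed

lemma laplacian_mult:
  fixes f g :: "real^'n::finite \<Rightarrow> 'b::real_normed_algebra"
  assumes "open G" "x \<in> G" "Ck_on 2 G f" "Ck_on 2 G g"
  shows "laplacian (\<lambda>y. f y * g y) x
       = f x * laplacian g x
         + 2 *\<^sub>R (\<Sum>i\<in>UNIV. partial_deriv i f x * partial_deriv i g x)
         + laplacian f x * g x"
proof -
  note df = Ck_on_2_differentiable[OF assms(3)] and dg = Ck_on_2_differentiable[OF assms(4)]
  have "partial_deriv i (partial_deriv i (\<lambda>y. f y * g y)) x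
      = partial_deriv i (\<lambda>y. f y * partial_deriv i g y + partial_deriv i f y * g y) x" for i
    using assms(1,2) by (rule partial_deriv_local) (simp add: partial_deriv_mult df dg)
  also have "\<dots> i = f x * partial_deriv i (partial_deriv i g) x
      + (partial_deriv i f x * partial_deriv i g x + partial_deriv i f x * partial_deriv i g x)
      + partial_deriv i (partial_deriv i f) x * g x" for i
    using df[OF assms(2)] dg[OF assms(2)]
    by (simp add: partial_deriv_add partial_deriv_mult algebra_simps)
  finally show ?thesis
    by (simp add: laplacian_def sum.distrib sum_distrib_left sum_distrib_right scaleR_2)
qed

lemma laplacian_linear:
  assumes "bounded_linear L" "open G" "x \<in> G" "Ck_on 2 G f"
  shows "laplacian (\<lambda>y. L (f y)) x = L (laplacian f x)"
proof -
  note d = Ck_on_2_differentiable[OF assms(4)]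
  have "partial_deriv i (partial_deriv i (\<lambda>y. L (f y))) x
      = partial_deriv i (\<lambda>y. L (partial_deriv i f y)) x" for i
    using assms(2,3) by (rule partial_deriv_local) (simp add: partial_deriv_linear[OF assms(1)] d)
  also have "\<dots> i = L (partial_deriv i (partial_deriv i f) x)" for i
    by (simp add: partial_deriv_linear[OF assms(1)] d assms(3))
  finally show ?thesis
    by (simp add: laplacian_def linear_sum[OF bounded_linear.linear[OF assms(1)]])
qed

subsection \<open>Powers of the Euclidean norm\<close>

lemma has_derivative_norm_powr:
  fixes x :: "real^'n::finite"
  assumes "x \<noteq> 0"
  shows "((\<lambda>y. norm y powr g) has_derivative (\<lambda>h. g * norm x powr (g - 2) * (x \<bullet> h))) (at x)"
proof -
  have nx: "norm x > 0" using assms by simp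
  have "((\<lambda>y. norm y powr g) has_derivative
          (\<lambda>h. norm x powr g * (0 * ln (norm x) + h \<bullet> sgn x * g / norm x))) (at x)"
    using has_derivative_powr[OF has_derivative_norm[OF assms] has_derivative_const[of g]] nx
    by simp
  moreover have "norm x powr g = norm x powr (g - 2) * norm x ^ 2"
    using nx by (simp add: powr_diff powr_realpow)
  ultimately show ?thesis
    using nx by (simp add: sgn_div_norm inner_commute field_simps power2_eq_square)
qed

lemma partial_deriv_norm_powr:
  fixes x :: "real^'n::finite"
  assumes "x \<noteq> 0"
  shows "partial_deriv i (\<lambda>y. norm y powr g) x = g * norm x powr (g - 2) * x $ i"
  using partial_deriv_eq[OF has_derivative_norm_powr[OF assms]] by (simp add: inner_axis)

lemma Ck_on_norm_powr: "Ck_on k (- {0::real^'n::finite}) (\<lambda>y. norm y powr g)"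
proof (induction k arbitrary: g)
  case 0
  show ?case by (auto intro!: continuous_intros)
next
  case (Suc k)
  have "Ck_on k (- {0}) (partial_deriv i (\<lambda>y::real^'n. norm y powr g))" for i
  proof -
    have "Ck_on k (- {0}) (\<lambda>y::real^'n. g * norm y powr (g - 2) * y $ i)"
      by (intro Ck_on_mult Ck_on_const Ck_on_coord Suc.IH) auto
    then show ?thesis
      using Ck_on_cong[of "- {0}" "partial_deriv i (\<lambda>y::real^'n. norm y powr g)"
                         "\<lambda>y. g * norm y powr (g - 2) * y $ i" k]
      by (auto simp: partial_deriv_norm_powr)
  qed
  moreover have "(\<lambda>y::real^'n. norm y powr g) differentiable at x" if "x \<noteq> 0" for x
    using has_derivative_norm_powr[OF that] unfolding differentiable_def by blast
  ultimately show ?case by (auto intro!: continuous_intros)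
qed

lemma laplacian_norm_powr:
  fixes x :: "real^'n::finite"
  assumes "x \<noteq> 0"
  shows "laplacian (\<lambda>y. norm y powr g) x = g * (g - 2 + real CARD('n)) * norm x powr (g - 2)"
proof -
  have open_G: "open (- {0::real^'n})" by (rule open_Compl) simp
  have d: "(\<lambda>y::real^'n. norm y powr (g - 2)) differentiable at x"
    using Ck_on_2_differentiable(1)[OF Ck_on_norm_powr] assms by simp
  have dc: "(\<lambda>y::real^'n. y $ i) differentiable at x" for i
    using has_derivative_coord unfolding differentiable_def by blast
  have "partial_deriv i (partial_deriv i (\<lambda>y. norm y powr g)) x
      = partial_deriv i (\<lambda>y. g * (norm y powr (g - 2) * y $ i)) x" for i
    using open_G by (rule partial_deriv_local) (auto simp: assms partial_deriv_norm_powr)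
  also have "\<dots> i = g * (norm x powr (g - 2) + (g - 2) * (norm x powr (g - 4) * (x $ i * x $ i)))"
    for i
    using d dc assms
    by (simp add: partial_deriv_linear[OF bounded_linear_mult_right] partial_deriv_mult
          partial_deriv_norm_powr partial_deriv_coord)
  finally have "laplacian (\<lambda>y. norm y powr g) x
      = g * (real CARD('n) * norm x powr (g - 2) + (g - 2) * (norm x powr (g - 4) * norm x ^ 2))"
    by (simp add: laplacian_def sum.distrib power2_norm_eq_inner inner_vec_def
             flip: sum_distrib_left)
  also have "norm x powr (g - 4) * norm x ^ 2 = norm x powr (g - 2)"
  proof -
    have "norm x powr (g - 4) * norm x ^ 2 = norm x powr (g - 4) * norm x powr 2"
      using assms by (simp add: powr_numeral)
    also have "\<dots> = norm x powr (g - 2)" unfolding powr_add[symmetric] by simp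
    finally show ?thesis .
  qed
  finally show ?thesis by (simp add: algebra_simps)
qed

subsection \<open>Homogeneous polynomials\<close>

lemma Ck_on_homogeneous_poly:
  fixes Y :: "real^'n::finite \<Rightarrow> real"
  assumes "homogeneous_poly m Y"
  shows "Ck_on k UNIV Y"
proof -
  obtain c where c: "\<And>x. Y x = (\<Sum>a\<in>{a. sum a UNIV = m}. c a * (\<Prod>i\<in>UNIV. (x $ i) ^ a i))"
    using assms unfolding homogeneous_poly_def by blast
  have "Ck_on k UNIV (\<lambda>x::real^'n. \<Sum>a\<in>{a. sum a UNIV = m}. c a * (\<Prod>i\<in>UNIV. (x $ i) ^ a i))"
    by (intro Ck_on_sum Ck_on_mult Ck_on_const Ck_on_prod Ck_on_power Ck_on_coord) auto
  moreover have "Y = (\<lambda>x. \<Sum>a\<in>{a. sum a UNIV = m}. c a * (\<Prod>i\<in>UNIV. (x $ i) ^ a i))"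
    using c by auto
  ultimately show ?thesis by simp
qed

lemma homogeneous_poly_scale:
  fixes Y :: "real^'n::finite \<Rightarrow> real"
  assumes "homogeneous_poly m Y"
  shows "Y (t *\<^sub>R x) = t ^ m * Y x"
proof -
  obtain c where c: "\<And>x. Y x = (\<Sum>a\<in>{a. sum a UNIV = m}. c a * (\<Prod>i\<in>UNIV. (x $ i) ^ a i))"
    using assms unfolding homogeneous_poly_def by blast
  have "(\<Prod>i\<in>UNIV. ((t *\<^sub>R x) $ i) ^ a i) = t ^ m * (\<Prod>i\<in>UNIV. (x $ i) ^ a i)"
    if "sum a UNIV = m" for a :: "'n \<Rightarrow> nat"
  proof -
    have "(\<Prod>i\<in>UNIV. ((t *\<^sub>R x) $ i) ^ a i) = (\<Prod>i\<in>UNIV. t ^ a i) * (\<Prod>i\<in>UNIV. (x $ i) ^ a i)"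
      by (simp add: power_mult_distrib prod.distrib)
    also have "(\<Prod>i\<in>UNIV. t ^ a i) = t ^ m" using that power_sum[of t a UNIV] by simp
    finally show ?thesis .
  qed
  then show ?thesis unfolding c by (simp add: sum_distrib_left algebra_simps)
qed

text \<open>Euler's identity \<open>x \<cdot> \<nabla>Y(x) = m Y(x)\<close>: differentiate \<open>Y (t x) = t\<^sup>m Y x\<close> at \<open>t = 1\<close>.\<close>

lemma euler_identity:
  fixes Y :: "real^'n::finite \<Rightarrow> real"
  assumes "homogeneous_poly m Y"
  shows "(\<Sum>i\<in>UNIV. x $ i * partial_deriv i Y x) = real m * Y x"
proof -
  define D where "D = frechet_derivative Y (at x)"
  have YD: "(Y has_derivative D) (at x)"
    using Ck_on_homogeneous_poly[OF assms, of 1] unfolding D_def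
    by (simp add: frechet_derivative_works)
  have lin: "linear D" using YD has_derivative_linear by blast
  have "((\<lambda>t::real. t *\<^sub>R x) has_derivative (\<lambda>h. h *\<^sub>R x)) (at 1)"
    using has_derivative_scaleR_left[OF has_derivative_ident, of x "at 1"] by simp
  then have "((\<lambda>t. Y (t *\<^sub>R x)) has_derivative (\<lambda>h. D (h *\<^sub>R x))) (at 1)"
    using has_derivative_compose YD by fastforce
  moreover have "(\<lambda>h. D (h *\<^sub>R x)) = (*) (D x)"
    using linear_cmul[OF lin] by (auto simp: mult.commute)
  ultimately have "((\<lambda>t. Y (t *\<^sub>R x)) has_field_derivative D x) (at 1)"
    by (simp add: has_field_derivative_def)
  moreover have "((\<lambda>t. Y (t *\<^sub>R x)) has_field_derivative real m * Y x) (at 1)"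
    using DERIV_cmult_right[OF DERIV_pow[of m "1::real"], of "Y x"]
    by (simp add: homogeneous_poly_scale[OF assms])
  ultimately have "D x = real m * Y x" by (rule DERIV_unique)
  moreover have "D x = (\<Sum>i\<in>UNIV. x $ i * partial_deriv i Y x)"
  proof -
    have "D x = D (\<Sum>i\<in>UNIV. x $ i *\<^sub>R axis i 1)"
      using basis_expansion[of x] by (simp add: scalar_mult_eq_scaleR)
    also have "\<dots> = (\<Sum>i\<in>UNIV. x $ i * D (axis i 1))"
      by (simp add: linear_sum[OF lin] linear_cmul[OF lin])
    finally show ?thesis by (simp add: D_def partial_deriv_def)
  qed
  ultimately show ?thesis by simp
qed

lemma Ck_on_norm_powr_times_poly:
  fixes Y :: "real^'n::finite \<Rightarrow> real"
  assumes "homogeneous_poly m Y"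
  shows "Ck_on k (- {0}) (\<lambda>y. norm y powr g * Y y)"
  using Ck_on_subset[OF Ck_on_homogeneous_poly[OF assms, of k], of "- {0}"]
  by (intro Ck_on_mult Ck_on_norm_powr) auto

lemma smooth_on_norm_powr_times_poly:
  fixes Y :: "real^'n::finite \<Rightarrow> real"
  assumes "homogeneous_poly m Y"
  shows "smooth_on (- {0}) (\<lambda>y. complex_of_real (norm y powr g * Y y))"
  unfolding smooth_on_def
  using Ck_on_linear[OF _ bounded_linear_of_real Ck_on_norm_powr_times_poly[OF assms]]
  by (auto intro: open_Compl)

lemma laplacian_norm_powr_times_harmonic:
  fixes Y :: "real^'n::finite \<Rightarrow> real"
  assumes "harmonic_homogeneous_poly m Y" "x \<noteq> 0"
  shows "laplacian (\<lambda>y. norm y powr g * Y y) x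
       = g * (g - 2 + real CARD('n) + 2 * real m) * (norm x powr (g - 2) * Y x)"
proof -
  have hp: "homogeneous_poly m Y" and harm: "laplacian Y x = 0"
    using assms(1) unfolding harmonic_homogeneous_poly_def by auto
  have G: "open (- {0::real^'n})" "x \<in> - {0}" using assms(2) by (auto intro: open_Compl)
  have "laplacian (\<lambda>y. norm y powr g * Y y) x
      = norm x powr g * laplacian Y x
        + 2 *\<^sub>R (\<Sum>i\<in>UNIV. partial_deriv i (\<lambda>y. norm y powr g) x * partial_deriv i Y x)
        + laplacian (\<lambda>y. norm y powr g) x * Y x"
    using G Ck_on_norm_powr Ck_on_subset[OF Ck_on_homogeneous_poly[OF hp]]
    by (intro laplacian_mult) auto
  also have "(\<Sum>i\<in>UNIV. partial_deriv i (\<lambda>y. norm y powr g) x * partial_deriv i Y x)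
      = g * norm x powr (g - 2) * (\<Sum>i\<in>UNIV. x $ i * partial_deriv i Y x)"
    by (simp add: partial_deriv_norm_powr assms(2) sum_distrib_left mult_ac)
  also have "(\<Sum>i\<in>UNIV. x $ i * partial_deriv i Y x) = real m * Y x"
    by (rule euler_identity[OF hp])
  finally show ?thesis
    by (simp add: harm laplacian_norm_powr[OF assms(2)] algebra_simps)
qed

text \<open>The coefficient \<open>c\<^sub>p\<close> with \<open>\<Delta>\<^sup>p (|x|\<^sup>2\<^sup>\<alpha> Y) = c\<^sub>p |x|\<^sup>2\<^sup>\<alpha>\<^sup>-\<^sup>2\<^sup>p Y\<close> in dimension \<open>d\<close>
  for a harmonic homogeneous polynomial \<open>Y\<close> of degree \<open>m\<close>.\<close>

definition lap_coeff :: "real \<Rightarrow> nat \<Rightarrow> nat \<Rightarrow> nat \<Rightarrow> real" where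
  "lap_coeff \<alpha> d m p =
     (\<Prod>i<p. (2 * \<alpha> - 2 * real i) * (2 * \<alpha> - 2 * real i - 2 + real d + 2 * real m))"

text \<open>Iterating the formula for \<open>\<Delta>(|x|\<^sup>g Y)\<close>; the Laplacian of the complex-valued \<open>H\<close> is
  computed through the real-valued one using linearity of \<open>\<Delta>\<close>.\<close>

lemma iterated_laplacian_norm_powr_times_harmonic:
  fixes Y :: "real^'n::finite \<Rightarrow> real"
  assumes "harmonic_homogeneous_poly m Y" "x \<noteq> 0"
  shows "(laplacian ^^ p) (\<lambda>y. complex_of_real (norm y powr (2 * \<alpha>) * Y y)) x
       = complex_of_real (lap_coeff \<alpha> CARD('n) m p * (norm x powr (2 * \<alpha> - 2 * real p) * Y x))"
  using assms(2)
proof (induction p arbitrary: x)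
  case 0
  then show ?case by (simp add: lap_coeff_def)
next
  case (Suc p)
  have hp: "homogeneous_poly m Y"
    using assms(1) by (simp add: harmonic_homogeneous_poly_def)
  define c where "c = lap_coeff \<alpha> CARD('n) m p"
  define g where "g = 2 * \<alpha> - 2 * real p"
  have G: "open (- {0::real^'n})" "x \<in> - {0}" using Suc.prems by (auto intro: open_Compl)
  have L: "bounded_linear (\<lambda>t. complex_of_real (c * t))"
    by (rule bounded_linear_compose[OF bounded_linear_of_real bounded_linear_mult_right])
  have "(laplacian ^^ Suc p) (\<lambda>y. complex_of_real (norm y powr (2 * \<alpha>) * Y y)) x
      = laplacian ((laplacian ^^ p) (\<lambda>y. complex_of_real (norm y powr (2 * \<alpha>) * Y y))) x"
    by simp
  also have "\<dots> = laplacian (\<lambda>y. complex_of_real (c * (norm y powr g * Y y))) x"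
    using G by (rule laplacian_local) (simp add: Suc.IH c_def g_def del: of_real_mult)
  also have "\<dots> = complex_of_real (c * laplacian (\<lambda>y. norm y powr g * Y y) x)"
    using G Ck_on_norm_powr_times_poly[OF hp] by (rule laplacian_linear[OF L])
  also have "\<dots> = complex_of_real (c * (g * (g - 2 + real CARD('n) + 2 * real m))
                   * (norm x powr (g - 2) * Y x))"
    by (simp add: laplacian_norm_powr_times_harmonic[OF assms(1) Suc.prems])
  finally show ?case
    by (simp add: c_def g_def lap_coeff_def algebra_simps)
qed

subsection \<open>Finite order\<close>

lemma lap_coeff_eq_0:
  assumes "\<alpha> \<in> \<nat> \<or> (\<exists>j::nat. \<alpha> = 1 - real d / 2 - real m + real j)"
  shows "\<exists>p. lap_coeff \<alpha> d m p = 0"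
proof (cases "\<alpha> \<in> \<nat>")
  case True
  then obtain n where "\<alpha> = real n" using Nats_cases by blast
  then have "lap_coeff \<alpha> d m (Suc n) = 0"
    unfolding lap_coeff_def by (intro prod_zero) (auto intro!: bexI[of _ n])
  then show ?thesis by blast
next
  case False
  then obtain j :: nat where "\<alpha> = 1 - real d / 2 - real m + real j" using assms by blast
  then have "2 * \<alpha> - 2 * real j - 2 + real d + 2 * real m = 0" by simp
  then have "lap_coeff \<alpha> d m (Suc j) = 0"
    unfolding lap_coeff_def by (intro prod_zero bexI[of _ j]) auto
  then show ?thesis by blast
qed

lemma polyharmonic_finite_order_norm_powr_times_harmonic:
  fixes Y :: "real^'n::finite \<Rightarrow> real"
  assumes "harmonic_homogeneous_poly m Y"
    and "\<alpha> \<in> \<nat> \<or> (\<exists>j::nat. \<alpha> = 1 - real CARD('n) / 2 - real m + real j)"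
  shows "polyharmonic_finite_order (- {0}) (\<lambda>y. complex_of_real (norm y powr (2 * \<alpha>) * Y y))"
proof -
  obtain p where "lap_coeff \<alpha> CARD('n) m p = 0" using lap_coeff_eq_0[OF assms(2)] by blast
  then show ?thesis
    unfolding polyharmonic_finite_order_def
    by (intro exI[of _ p]) (simp add: iterated_laplacian_norm_powr_times_harmonic[OF assms(1)]
                              del: of_real_mult)
qed

subsection \<open>Growth of the coefficients\<close>

text \<open>If \<open>a i / ((2i+1)(2i+2)) \<longlonglongrightarrow> L < q\<^sup>2\<close>, then \<open>\<Prod>i<p. a i = O((2p)! q\<^sup>2\<^sup>p)\<close>: the
  quotients \<open>t p = (\<Prod>i<p. a i) / ((2p)! q\<^sup>2\<^sup>p)\<close> form a summable series by the ratio test,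
  hence a bounded sequence.\<close>

lemma prod_le_fact_double_power:
  fixes a :: "nat \<Rightarrow> real" and q L :: real
  assumes "\<And>i. 0 \<le> a i" "0 < q"
    and "(\<lambda>i. a i / ((2 * real i + 1) * (2 * real i + 2))) \<longlonglongrightarrow> L" "L < q ^ 2"
  shows "\<exists>B>0. \<forall>p. (\<Prod>i<p. a i) \<le> B * fact (2 * p) * q ^ (2 * p)"
proof -
  define t where "t p = (\<Prod>i<p. a i) / (fact (2 * p) * q ^ (2 * p))" for p
  define c where "c = (L / q ^ 2 + 1) / 2"
  have q2: "0 < q ^ 2" using assms(2) by simp
  have c: "L / q ^ 2 < c" "c < 1" using assms(4) q2 by (auto simp: c_def field_simps)
  have "(\<lambda>i. a i / ((2 * real i + 1) * (2 * real i + 2)) / q ^ 2) \<longlonglongrightarrow> L / q ^ 2"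
    using tendsto_divide[OF assms(3) tendsto_const] q2 by simp
  from order_tendstoD(2)[OF this c(1)] obtain N
    where N: "\<And>i. N \<le> i \<Longrightarrow> a i / ((2 * real i + 1) * (2 * real i + 2)) / q ^ 2 < c"
    unfolding eventually_sequentially by blast
  have t_Suc: "t (Suc p) = t p * (a p / ((2 * real p + 1) * (2 * real p + 2)) / q ^ 2)" for p
  proof -
    have "fact (2 * Suc p) = (fact (2 * p) :: real) * ((2 * real p + 1) * (2 * real p + 2))"
      by (simp add: algebra_simps)
    then show ?thesis by (simp add: t_def power_mult power2_eq_square field_simps)
  qed
  have "norm (t (Suc p)) \<le> c * norm (t p)" if "N \<le> p" for p
  proof -
    have "0 \<le> t p" unfolding t_def using assms(1,2) by (simp add: prod_nonneg)
    moreover have "0 \<le> a p / ((2 * real p + 1) * (2 * real p + 2)) / q ^ 2"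
      using assms(1) q2 by simp
    ultimately have "norm (t (Suc p)) = t p * (a p / ((2 * real p + 1) * (2 * real p + 2)) / q ^ 2)"
      unfolding t_Suc real_norm_def by (intro abs_of_nonneg mult_nonneg_nonneg)
    also have "\<dots> \<le> t p * c"
      using N[OF that] \<open>0 \<le> t p\<close> by (intro mult_left_mono) auto
    finally show ?thesis using \<open>0 \<le> t p\<close> by (simp add: mult.commute)
  qed
  then have "summable t" using c(2) by (intro summable_ratio_test) auto
  then have "Bseq t" using convergent_imp_Bseq summable_LIMSEQ_zero convergentI by blast
  then obtain B where B: "B > 0" "\<And>p. norm (t p) \<le> B" by (auto elim: BseqE)
  have "(\<Prod>i<p. a i) \<le> B * fact (2 * p) * q ^ (2 * p)" for p
  proof -
    have pos: "0 < fact (2 * p) * q ^ (2 * p)" using assms(2) by simp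
    have "(\<Prod>i<p. a i) = t p * (fact (2 * p) * q ^ (2 * p))"
      using pos assms(2) unfolding t_def by simp
    also have "\<dots> \<le> B * (fact (2 * p) * q ^ (2 * p))"
      using B(2)[of p] pos by (intro mult_right_mono) auto
    finally show ?thesis by (simp add: mult.assoc)
  qed
  then show ?thesis using B(1) by blast
qed

text \<open>Each factor of \<open>c\<^sub>p\<close> is asymptotic to \<open>(2p+1)(2p+2)\<close>, so \<open>c\<^sub>p\<close> grows at most like
  \<open>(2p)! q\<^sup>2\<^sup>p\<close> for every \<open>q > 1\<close>.\<close>

lemma lap_coeff_growth:
  assumes "1 < q"
  shows "\<exists>B>0. \<forall>p. \<bar>lap_coeff \<alpha> d m p\<bar> \<le> B * fact (2 * p) * q ^ (2 * p)"
proof -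
  define a where "a i = \<bar>(2 * \<alpha> - 2 * real i) * (2 * \<alpha> - 2 * real i - 2 + real d + 2 * real m)\<bar>"
    for i :: nat
  have "(\<lambda>i. a i / ((2 * real i + 1) * (2 * real i + 2))) \<longlonglongrightarrow> 1"
    unfolding a_def by real_asymp
  moreover have "1 < q ^ 2" using assms by (simp add: one_less_power)
  moreover have "0 \<le> a i" for i by (simp add: a_def)
  ultimately have "\<exists>B>0. \<forall>p. (\<Prod>i<p. a i) \<le> B * fact (2 * p) * q ^ (2 * p)"
    using assms by (intro prod_le_fact_double_power) auto
  moreover have "\<bar>lap_coeff \<alpha> d m p\<bar> = (\<Prod>i<p. a i)" for p
    by (simp add: lap_coeff_def abs_prod a_def)
  ultimately show ?thesis by simp
qed

subsection \<open>Infinite order\<close>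

text \<open>Since \<open>|\<Delta>\<^sup>p H(x)| = |c\<^sub>p| |H(x)| / |x|\<^sup>2\<^sup>p\<close>, bounds \<open>|c\<^sub>p| \<le> b\<close>, \<open>|H(x)| \<le> M\<close> and
  \<open>|x| \<ge> \<rho>\<close> give \<open>|\<Delta>\<^sup>p H(x)| \<le> b M / \<rho>\<^sup>2\<^sup>p\<close>.\<close>

lemma iterated_laplacian_pointwise_bound:
  fixes Y :: "real^'n::finite \<Rightarrow> real"
  assumes Y: "harmonic_homogeneous_poly m Y"
    and x: "0 < \<rho>" "\<rho> \<le> norm x" "\<bar>norm x powr (2 * \<alpha>) * Y x\<bar> \<le> M"
    and c: "\<bar>lap_coeff \<alpha> CARD('n) m p\<bar> \<le> b"
  shows "norm ((laplacian ^^ p) (\<lambda>y. complex_of_real (norm y powr (2 * \<alpha>) * Y y)) x)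
       \<le> b * (M / \<rho> ^ (2 * p))"
proof -
  have nx: "0 < norm x" using x(1,2) by linarith
  have "norm x powr (2 * \<alpha> - 2 * real p) = norm x powr (2 * \<alpha>) / norm x ^ (2 * p)"
    using nx powr_realpow[OF nx, of "2 * p"] by (simp add: powr_diff)
  then have "norm ((laplacian ^^ p) (\<lambda>y. complex_of_real (norm y powr (2 * \<alpha>) * Y y)) x)
      = \<bar>lap_coeff \<alpha> CARD('n) m p\<bar> * (\<bar>norm x powr (2 * \<alpha>) * Y x\<bar> / norm x ^ (2 * p))"
    using iterated_laplacian_norm_powr_times_harmonic[OF Y, of x p \<alpha>] nx
    by (simp add: abs_mult norm_mult norm_divide norm_power)
  also have "\<dots> \<le> b * (M / \<rho> ^ (2 * p))"
  proof (rule mult_mono[OF c])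
    show "\<bar>norm x powr (2 * \<alpha>) * Y x\<bar> / norm x ^ (2 * p) \<le> M / \<rho> ^ (2 * p)"
      using x by (intro frac_le power_mono) auto
  qed (use c in auto)
  finally show ?thesis .
qed

text \<open>On a compact set at distance more than \<open>r\<^sub>0\<close> from the origin the iterated Laplacians
  satisfy the bound defining type \<open>1/r\<^sub>0\<close>: with \<open>\<rho> = min |x| > r\<^sub>0\<close>, apply the growth bound for
  \<open>c\<^sub>p\<close> with \<open>q = \<rho> (1/r\<^sub>0 + \<epsilon>) > 1\<close>, so that \<open>q\<^sup>2\<^sup>p / \<rho>\<^sup>2\<^sup>p = (1/r\<^sub>0 + \<epsilon>)\<^sup>2\<^sup>p\<close>.\<close>

lemma iterated_laplacian_bound_on_compact:
  fixes Y :: "real^'n::finite \<Rightarrow> real"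
  assumes Y: "harmonic_homogeneous_poly m Y"
    and K: "compact K" "\<And>x. x \<in> K \<Longrightarrow> r0 < norm x"
    and pos: "0 < r0" "0 < \<epsilon>"
  shows "\<exists>C>0. \<forall>p. \<forall>x\<in>K.
           norm ((laplacian ^^ p) (\<lambda>y. complex_of_real (norm y powr (2 * \<alpha>) * Y y)) x)
             \<le> C * fact (2 * p) * (1 / r0 + \<epsilon>) ^ (2 * p)"
proof (cases "K = {}")
  case True
  then show ?thesis by (intro exI[of _ 1]) auto
next
  case False
  define F where "F y = norm y powr (2 * \<alpha>) * Y y" for y :: "real^'n"
  obtain x0 where x0: "x0 \<in> K" "\<And>y. y \<in> K \<Longrightarrow> norm x0 \<le> norm y"
    using continuous_attains_inf[OF K(1) False continuous_on_norm_id] by blast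
  define \<rho> where "\<rho> = norm x0"
  have \<rho>: "r0 < \<rho>" "0 < \<rho>" using K(2)[OF x0(1)] pos(1) by (auto simp: \<rho>_def)
  have "K \<subseteq> - {0}" using K(2) pos(1) by force
  then have "continuous_on K F"
    using Ck_on_subset[OF Ck_on_norm_powr_times_poly[of m Y 0 "2 * \<alpha>"]] Y
    by (simp add: F_def harmonic_homogeneous_poly_def)
  then have "continuous_on K (\<lambda>y. \<bar>F y\<bar>)" by (intro continuous_intros)
  then obtain x1 where x1: "\<And>y. y \<in> K \<Longrightarrow> \<bar>F y\<bar> \<le> \<bar>F x1\<bar>"
    using continuous_attains_sup[OF K(1) False] by blast
  define M where "M = \<bar>F x1\<bar>"
  define q where "q = \<rho> * (1 / r0 + \<epsilon>)"
  have "1 < \<rho> * (1 / r0)" using \<rho> pos by (simp add: field_simps)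
  moreover have "0 < \<rho> * \<epsilon>" using \<rho> pos by simp
  ultimately have "1 < q" unfolding q_def distrib_left by linarith
  then obtain B where B: "B > 0" "\<And>p. \<bar>lap_coeff \<alpha> CARD('n) m p\<bar> \<le> B * fact (2 * p) * q ^ (2 * p)"
    using lap_coeff_growth by blast
  have "norm ((laplacian ^^ p) (\<lambda>y. complex_of_real (F y)) x)
          \<le> (B * (M + 1)) * fact (2 * p) * (1 / r0 + \<epsilon>) ^ (2 * p)" if x: "x \<in> K" for p x
  proof -
    have "norm ((laplacian ^^ p) (\<lambda>y. complex_of_real (F y)) x)
        \<le> (B * fact (2 * p) * q ^ (2 * p)) * (M / \<rho> ^ (2 * p))"
      unfolding F_def using \<rho>(2) x0(2)[OF x] x1[OF x] B(2)
      by (intro iterated_laplacian_pointwise_bound[OF Y]) (auto simp: \<rho>_def M_def F_def)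
    also have "\<dots> = B * M * fact (2 * p) * (1 / r0 + \<epsilon>) ^ (2 * p)"
      using \<rho>(2) by (simp add: q_def power_mult_distrib)
    also have "\<dots> \<le> B * (M + 1) * fact (2 * p) * (1 / r0 + \<epsilon>) ^ (2 * p)"
      using B(1) pos by (intro mult_right_mono) auto
    finally show ?thesis .
  qed
  moreover have "B * (M + 1) > 0" using B(1) by (simp add: M_def add_nonneg_pos)
  ultimately show ?thesis unfolding F_def by blast
qed

lemma polyharmonic_infinite_order_norm_powr_times_harmonic:
  fixes Y :: "real^'n::finite \<Rightarrow> real"
  assumes "harmonic_homogeneous_poly m Y" "0 < r0"
  shows "polyharmonic_infinite_order_type (annulus r0 r1) (1 / r0)
           (\<lambda>y. complex_of_real (norm y powr (2 * \<alpha>) * Y y))"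
proof -
  have A: "annulus r0 r1 \<subseteq> (- {0} :: (real^'n) set)" using assms(2) by (auto simp: annulus_def)
  show ?thesis
    unfolding polyharmonic_infinite_order_type_def
  proof (intro conjI allI impI)
    show "smooth_on (annulus r0 r1) (\<lambda>y. complex_of_real (norm y powr (2 * \<alpha>) * Y y))"
      using smooth_on_norm_powr_times_poly[of m Y "2 * \<alpha>"] assms(1) Ck_on_subset[OF _ A]
      unfolding smooth_on_def harmonic_homogeneous_poly_def by blast
  next
    fix K :: "(real^'n) set" and \<epsilon> :: real
    assume "compact K \<and> K \<subseteq> annulus r0 r1 \<and> 0 < \<epsilon>"
    then show "\<exists>C>0. \<forall>p. \<forall>x\<in>K.
        norm ((laplacian ^^ p) (\<lambda>y. complex_of_real (norm y powr (2 * \<alpha>) * Y y)) x)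
          \<le> C * fact (2 * p) * (1 / r0 + \<epsilon>) ^ (2 * p)"
      using assms by (intro iterated_laplacian_bound_on_compact) (auto simp: annulus_def)
  qed
qed

theorem mainTheorem2:
  fixes Y :: "real^'n::finite \<Rightarrow> real" and k :: nat and \<alpha> :: real
  assumes "CARD('n) \<ge> 2"
    and "harmonic_homogeneous_poly k Y"
  defines "H \<equiv> (\<lambda>x. complex_of_real (norm x powr (2 * \<alpha>) * Y x))"
  shows "((\<alpha> \<in> \<nat> \<or> (\<exists>j::nat. \<alpha> = 1 - real CARD('n) / 2 - real k + real j))
            \<longrightarrow> polyharmonic_finite_order (- {0}) H)
       \<and> (\<not> (\<alpha> \<in> \<nat> \<or> (\<exists>j::nat. \<alpha> = 1 - real CARD('n) / 2 - real k + real j))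
            \<longrightarrow> (\<forall>r0 r1. 0 < r0 \<and> ereal r0 < r1 \<longrightarrow>
                  polyharmonic_infinite_order_type (annulus r0 r1) (1 / r0) H))"
  unfolding H_def
  using polyharmonic_finite_order_norm_powr_times_harmonic[OF assms(2)]
        polyharmonic_infinite_order_norm_powr_times_harmonic[OF assms(2)]
  by blast

end
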